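(* Let $G$ be a finite graph with a proper edge-coloring, and let $\delta(G)$ denote its minimum degree. If $|V(G)|\ge 2\delta(G)$, then $G$ has a rainbow matching of size at least $\delta(G)-2(\delta(G))^{2/3}$.
   Context: An edge-coloring is proper if no two edges sharing an endpoint receive the same color (so each color class is a matching). A matching is rainbow if all of its edges have distinct colors. $\delta(G)$ is the minimum vertex degree of $G$. *)

theory Defs
  imports Complex_Main
begin

definition simple_graph :: "'a set \<Rightarrow> 'a set set \<Rightarrow> bool" where
  "simple_graph V E \<longleftrightarrow> finite V \<and> (\<forall>e\<in>E. e \<subseteq> V \<and> card e = 2)"

definition degree :: "'a set set \<Rightarrow> 'a \<Rightarrow> nat" where
  "degree E v = card {e\<in>E. v \<in> e}"

definition min_degree :: "'a set \<Rightarrow> 'a set set \<Rightarrow> nat" where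
  "min_degree V E = Min (degree E ` V)"

definition proper_edge_coloring :: "'a set set \<Rightarrow> ('a set \<Rightarrow> 'c) \<Rightarrow> bool" where
  "proper_edge_coloring E c \<longleftrightarrow>
     (\<forall>e\<in>E. \<forall>f\<in>E. e \<noteq> f \<and> e \<inter> f \<noteq> {} \<longrightarrow> c e \<noteq> c f)"

definition matching :: "'a set set \<Rightarrow> 'a set set \<Rightarrow> bool" where
  "matching E M \<longleftrightarrow> M \<subseteq> E \<and> (\<forall>e\<in>M. \<forall>f\<in>M. e \<noteq> f \<longrightarrow> e \<inter> f = {})"

definition rainbow :: "('a set \<Rightarrow> 'c) \<Rightarrow> 'a set set \<Rightarrow> bool" where
  "rainbow c M \<longleftrightarrow> inj_on c M"

end

theory Submission
  imports Defs
begin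

text \<open>Let \<open>M\<close> be a maximum rainbow matching with \<open>m < \<delta>\<close> edges, \<open>k = \<delta> - m\<close>, and let \<open>U\<close>
  be the set of uncovered vertices, so \<open>|U| \<ge> 2k\<close>. A switching trades some edges of \<open>M\<close> for
  edges from \<open>U\<close> to their endpoints and yields another maximum rainbow matching, which by
  maximality admits no edge between two of its uncovered vertices in a colour it does not use.
  Call a covered vertex robust if it can be switched, so as to free the colour of its \<open>M\<close>-edge,
  while avoiding any few forbidden vertices, edges and colours.

  The argument runs in rounds with a set \<open>S\<close> of \<open>M\<close>-edges each having a robust endpoint.
  Every \<open>u \<in> U\<close> sends at least \<open>k\<close> edges whose colours avoid \<open>c(M - S)\<close> into \<open>V(M - S)\<close>;
  an endpoint receiving at least \<open>T = 3R\<close> of them becomes robust, and no edge of \<open>M - S\<close>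
  gets two such endpoints. Double counting shows that \<open>x = |M - S|\<close> drops to at most
  \<open>x - (k - (T - 1) x / k)\<close> per round. If \<open>k > 2 \<delta> powr (2/3)\<close>, i.e. \<open>k\<^sup>3 > 8 \<delta>\<^sup>2\<close>, this
  recurrence becomes negative after \<open>R \<approx> k\<^sup>2/(4m)\<close> rounds, a contradiction.\<close>

section \<open>Counting and the recurrence\<close>

fun untouched_bound :: "real \<Rightarrow> real \<Rightarrow> real \<Rightarrow> nat \<Rightarrow> real" where
  "untouched_bound x0 k \<tau> 0 = x0"
| "untouched_bound x0 k \<tau> (Suc r) =
     untouched_bound x0 k \<tau> r - (k - \<tau> * untouched_bound x0 k \<tau> r / k)"

lemma untouched_bound_closed_form:
  assumes "k > 0" and "\<tau> > 0"
  shows "untouched_bound x0 k \<tau> r = k^2/\<tau> + (1 + \<tau>/k)^r * (x0 - k^2/\<tau>)"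
proof (induction r)
  case (Suc r)
  have "untouched_bound x0 k \<tau> (Suc r) = untouched_bound x0 k \<tau> r * (1 + \<tau>/k) - k"
    by (simp add: algebra_simps)
  also have "\<dots> = (k^2/\<tau> + (1 + \<tau>/k)^r * (x0 - k^2/\<tau>)) * (1 + \<tau>/k) - k"
    using Suc by simp
  also have "\<dots> = k^2/\<tau> + (1 + \<tau>/k)^Suc r * (x0 - k^2/\<tau>)"
    using assms by (simp add: field_simps power2_eq_square)
  finally show ?case .
qed simp

lemma untouched_bound_step_mono:
  fixes x y k \<tau> :: real
  assumes "k > 0" and "\<tau> \<ge> 0" and "x \<le> y"
  shows "x - (k - \<tau> * x / k) \<le> y - (k - \<tau> * y / k)"
proof -
  have "\<tau> * x / k \<le> \<tau> * y / k" using assms by (simp add: divide_right_mono mult_left_mono)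
  then show ?thesis using assms(3) by linarith
qed

lemma untouched_bound_negative:
  fixes x0 k t :: real
  assumes k: "k > 0" and t: "t > 0" and x0: "t * x0 < 3 * k^2 / 4"
    and growth: "4 < (1 + t/k)^R"
  shows "untouched_bound x0 k t R < 0"
proof -
  have "k^2 / (4 * t) < k^2/t - x0"
    using x0 t by (simp add: field_simps)
  moreover have "k^2 / (4 * t) > 0" using k t by simp
  ultimately have "4 * (k^2 / (4 * t)) < (1 + t/k)^R * (k^2/t - x0)"
    using growth by (intro mult_strict_mono) auto
  moreover have "untouched_bound x0 k t R = k^2/t - (1 + t/k)^R * (k^2/t - x0)"
    using untouched_bound_closed_form[OF k t] by (simp add: algebra_simps)
  ultimately show ?thesis using t by simp
qed

lemma exp_29_20_gt_4: "4 < exp (29/20::real)"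
proof -
  have "(4::real) < (1 + (29/20) / real (20::nat)) ^ 20"
    by (simp add: power_divide less_divide_eq)
  also have "\<dots> \<le> exp (29/20)"
    by (rule exp_ge_one_plus_x_over_n_power_n) auto
  finally show ?thesis .
qed

lemma four_less_growth:
  fixes k :: real
  assumes k: "k > 0" and R: "R \<ge> 1" and poly: "29 * k \<le> (3 * real R - 1) * (20 * real R - 29)"
  shows "4 < (1 + (3 * real R - 1) / k)^R"
proof -
  define e where "e = (3 * real R - 1) / k"
  have e: "e > 0" unfolding e_def using R k by simp
  have "29 \<le> e * (20 * real R - 29)"
    using poly k unfolding e_def by (simp add: le_divide_eq)
  then have "29 * (1 + e) \<le> 20 * (real R * e)" by (simp add: algebra_simps)
  then have "29 / 20 \<le> real R * (e / (1 + e))" using e by (simp add: le_divide_eq)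
  moreover have "e / (1 + e) \<le> ln (1 + e)" using ln_add1_ge[of e] e by (simp add: add.commute)
  ultimately have "29 / 20 \<le> real R * ln (1 + e)"
    using mult_left_mono[of "e / (1 + e)" "ln (1 + e)" "real R"] by linarith
  then have "exp (29 / 20) \<le> exp (real R * ln (1 + e))" by simp
  also have "\<dots> = (1 + e)^R" using e by (simp add: exp_of_nat_mult)
  finally show ?thesis using exp_29_20_gt_4 unfolding e_def by linarith
qed

text \<open>With \<open>K = k\<^sup>2/(4m)\<close> and \<open>R = \<lfloor>K\<rfloor>\<close>, the hypothesis \<open>k\<^sup>3 > 8(m+k)\<^sup>2\<close>
  makes \<open>60K\<^sup>2 - 227K - 29k\<close> nonnegative, and \<open>R > K - 1\<close> transfers this to \<open>R\<close>.\<close>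
lemma rounds_polynomial_bound:
  fixes m k :: real and R :: nat
  assumes cube: "k^3 > 8 * (m + k)^2" and m: "m > 0" and k: "k > 0"
    and R_le: "4 * m * real R \<le> k^2" and R_gt: "k^2 < 4 * m * (real R + 1)"
  shows "29 * k \<le> (3 * real R - 1) * (20 * real R - 29)"
proof -
  define K where "K = k^2 / (4 * m)"
  have k4: "116 * k * m^2 + 227 * k^2 * m \<le> 15 * k^4"
  proof -
    have "k * (8 * m^2 + 16 * (m * k) + 8 * k^2) \<le> k * k^3"
      using cube k by (intro mult_left_mono) (auto simp: power2_eq_square algebra_simps)
    moreover have "k^3 \<ge> 0" "k * m^2 \<ge> 0" "k^2 * m \<ge> 0" using k m by simp_all
    ultimately show ?thesis by (simp add: algebra_simps power2_eq_square power3_eq_cube power4_eq_xxxx)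
  qed
  have "8 * m < k^2"
  proof -
    have "8 * (k * k) + 8 * (m * m) + 16 * (m * k) < k * (k * k)"
      using cube by (simp add: power3_eq_cube power2_eq_square algebra_simps)
    moreover have "0 < m * k" "0 \<le> k * k" "0 \<le> m * m" using m k by simp_all
    ultimately have "8 * (m * k) < k * (k * k)" by linarith
    then have "k * (8 * m) < k * k^2" by (simp add: power2_eq_square algebra_simps)
    then show ?thesis using k by simp
  qed
  then have K2: "K > 2" unfolding K_def using m by (simp add: less_divide_eq)
  have RK: "real R > K - 1" unfolding K_def using R_gt m by (simp add: divide_less_eq algebra_simps)
  have R_mono: "60 * (K-1)^2 - 107 * (K-1) \<le> 60 * real R^2 - 107 * real R"
  proof -
    have "0 \<le> (real R - (K - 1)) * (60 * (real R + K - 1) - 107)"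
      using RK K2 by (intro mult_nonneg_nonneg) auto
    then show ?thesis by (simp add: algebra_simps power2_eq_square)
  qed
  have "60 * K^2 - 227 * K - 29 * k = (15 * k^4 - 227 * k^2 * m - 116 * k * m^2) / (4 * m^2)"
    unfolding K_def using m by (simp add: field_simps power2_eq_square power4_eq_xxxx)
  moreover have "0 \<le> (15 * k^4 - 227 * k^2 * m - 116 * k * m^2) / (4 * m^2)"
    using k4 by simp
  ultimately have "29 * k \<le> 60 * K^2 - 227 * K" by linarith
  moreover have "60 * (K-1)^2 - 107 * (K-1) = 60 * K^2 - 227 * K + 167"
    by (simp add: algebra_simps power2_eq_square)
  moreover have "(3 * real R - 1) * (20 * real R - 29) = 60 * real R^2 - 107 * real R + 29"
    by (simp add: algebra_simps power2_eq_square)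
  ultimately show ?thesis using R_mono by linarith
qed

lemma untouched_bound_eventually_negative:
  fixes m k :: nat
  assumes cube: "real k^3 > 8 * (real m + real k)^2"
  shows "\<exists>R\<ge>1. untouched_bound (real m) (real k) (real (3*R - 1)) R < 0"
proof -
  have "real k^2 \<le> (real m + real k)^2" by (simp add: power_mono)
  then have "8 * real k^2 < real k * real k^2" using cube by (simp add: power3_eq_cube power2_eq_square)
  then have k8: "real k > 8" by (simp add: mult_less_cancel_right)
  show ?thesis
  proof (cases "2 * m \<le> k")
    case True
    then have "2 * real m / real k \<le> 1" using k8 by (simp add: divide_le_eq)
    moreover have "untouched_bound (real m) (real k) (real (3*1 - 1)) 1
        = real m - (real k - 2 * real m / real k)" by simp
    ultimately have "untouched_bound (real m) (real k) (real (3*1 - 1)) 1 < 0"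
      using True k8 by linarith
    then show ?thesis by (intro exI[of _ 1]) simp
  next
    case False
    then have m: "real m > 0" "real k < 2 * real m" by linarith+
    define R where "R = (k * k) div (4 * m)"
    have R_le: "4 * real m * real R \<le> real k^2"
      unfolding R_def power2_eq_square
      by (metis of_nat_le_iff of_nat_mult of_nat_numeral times_div_less_eq_dividend)
    have R_gt: "real k^2 < 4 * real m * (real R + 1)"
    proof -
      have "k * k < 4 * m * (R + 1)"
        using dividend_less_times_div[of "4 * m" "k * k"] m(1) unfolding R_def by (simp add: algebra_simps)
      then show ?thesis unfolding power2_eq_square by (metis of_nat_less_iff of_nat_mult of_nat_numeral of_nat_Suc Suc_eq_plus1 add.commute)
    qed
    have poly: "29 * real k \<le> (3 * real R - 1) * (20 * real R - 29)"
      using rounds_polynomial_bound[OF cube m(1) _ R_le R_gt] k8 by simp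
    have R1: "R \<ge> 1"
    proof (rule ccontr)
      assume "\<not> R \<ge> 1"
      then have "R = 0" by simp
      then show False using poly k8 by simp
    qed
    define t where "t = 3 * real R - 1"
    have t: "t > 0" unfolding t_def using R1 by simp
    have "t * real m < 3 * real k^2 / 4"
      using R_le m(1) unfolding t_def by (simp add: algebra_simps)
    then have "untouched_bound (real m) (real k) t R < 0"
      using untouched_bound_negative[OF _ t] four_less_growth[OF _ R1 poly] k8 unfolding t_def by simp
    moreover have "real (3*R - 1) = t" using R1 unfolding t_def by (simp add: of_nat_diff)
    ultimately show ?thesis using R1 by (intro exI[of _ R]) simp
  qed
qed

lemma cube_gt_of_powr_gt:
  fixes d k :: real
  assumes "0 < d" and "2 * d powr (2/3) < k"
  shows "8 * d^2 < k^3"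
proof -
  have "(2 * d powr (2/3))^3 = 8 * (d powr (2/3))^3" by (simp add: power_mult_distrib)
  also have "(d powr (2/3))^3 = (d powr (2/3)) powr (real 3)"
    using assms(1) by (simp add: powr_realpow)
  also have "\<dots> = d powr 2" by (simp add: powr_powr)
  also have "\<dots> = d^2" using assms(1) by (simp add: powr_realpow[of _ 2, simplified])
  finally have "(2 * d powr (2/3))^3 = 8 * d^2" .
  moreover have "(2 * d powr (2/3))^3 < k^3"
    using assms(2) by (intro power_strict_mono) auto
  ultimately show ?thesis by simp
qed

lemma sum_card_filter_swap:
  assumes "finite X" and "finite Y"
  shows "(\<Sum>x\<in>X. card {y\<in>Y. P x y}) = (\<Sum>y\<in>Y. card {x\<in>X. P x y})"
proof -
  have "card {y\<in>Y. P x y} = (\<Sum>y\<in>Y. if P x y then 1 else 0)" for x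
    using sum.inter_filter[OF assms(2), of "\<lambda>_. 1::nat" "P x"] by simp
  moreover have "card {x\<in>X. P x y} = (\<Sum>x\<in>X. if P x y then 1 else 0)" for y
    using sum.inter_filter[OF assms(1), of "\<lambda>_. 1::nat" "\<lambda>x. P x y"] by simp
  ultimately show ?thesis using sum.swap by simp
qed

lemma count_lower_bound:
  fixes k p x n \<tau> :: real
  assumes "0 < k" and "2 * k \<le> n" and "0 \<le> x" and "0 \<le> \<tau>"
    and count: "k * n \<le> p * n + 2 * x * \<tau>"
  shows "k - \<tau> * x / k \<le> p"
proof (cases "k \<le> p")
  case True
  then show ?thesis using assms(1,3,4) by (smt (verit) divide_nonneg_pos mult_nonneg_nonneg)
next
  case False
  then have "(k - p) * (2 * k) \<le> (k - p) * n" using assms(2) by (intro mult_left_mono) auto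
  then have "(k - p) * k \<le> x * \<tau>" using count by (simp add: algebra_simps)
  then have "(k * k - x * \<tau>) / k \<le> p" using assms(1) by (simp add: divide_le_eq algebra_simps)
  moreover have "(k * k - x * \<tau>) / k = k - \<tau> * x / k" using assms(1) by (simp add: field_simps)
  ultimately show ?thesis by simp
qed

section \<open>Maximum rainbow matchings\<close>

lemma simple_graph_finite_edges:
  assumes "simple_graph V E"
  shows "finite E"
proof -
  have "E \<subseteq> Pow V" using assms unfolding simple_graph_def by blast
  then show ?thesis using assms finite_subset unfolding simple_graph_def by blast
qed

lemma augment_rainbow_matching:
  assumes "matching E N" and "rainbow c N" and "finite N"
    and "x \<notin> \<Union>N" and "y \<notin> \<Union>N" and "{x,y} \<in> E" and "c {x,y} \<notin> c ` N"
  shows "matching E (insert {x,y} N)" and "rainbow c (insert {x,y} N)"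
    and "card (insert {x,y} N) = Suc (card N)"
proof -
  have "{x,y} \<notin> N" using assms(4) by blast
  then show "rainbow c (insert {x,y} N)" and "card (insert {x,y} N) = Suc (card N)"
    using assms(2,3,7) unfolding rainbow_def by auto
  show "matching E (insert {x,y} N)"
    using assms(1,4,5,6) unfolding matching_def by blast
qed

lemma ex_maximum_rainbow_matching:
  assumes "finite E"
  obtains M where "matching E M" and "rainbow c M"
    and "\<And>N. matching E N \<Longrightarrow> rainbow c N \<Longrightarrow> card N \<le> card M"
proof -
  have "card N < Suc (card E)" if "matching E N" for N
    using that assms card_mono[of E N] unfolding matching_def by simp
  moreover have "matching E {} \<and> rainbow c {}" unfolding matching_def rainbow_def by simp
  ultimately show ?thesis
    using Lattices_Big.ex_has_greatest_nat[of "\<lambda>N. matching E N \<and> rainbow c N" "{}" card "Suc (card E)"]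
      that by blast
qed

locale max_rainbow_matching =
  fixes V :: "'a set" and E :: "'a set set" and c :: "'a set \<Rightarrow> 'c"
    and M :: "'a set set" and \<delta> :: nat
  assumes graph: "simple_graph V E"
    and proper: "proper_edge_coloring E c"
    and matching_M: "matching E M"
    and rainbow_M: "rainbow c M"
    and maximum: "\<And>N. matching E N \<Longrightarrow> rainbow c N \<Longrightarrow> card N \<le> card M"
    and degree_ge: "\<And>v. v \<in> V \<Longrightarrow> \<delta> \<le> degree E v"
begin

definition U :: "'a set" where "U = V - \<Union>M"

abbreviation m :: nat where "m \<equiv> card M"

lemma finite_V: "finite V"
  using graph unfolding simple_graph_def by blast

lemma edge_in_V: "e \<in> E \<Longrightarrow> e \<subseteq> V" and card_edge: "e \<in> E \<Longrightarrow> card e = 2"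
  using graph unfolding simple_graph_def by blast+

lemma finite_E: "finite E"
  using simple_graph_finite_edges[OF graph] .

lemma edge_ends_distinct: "{x,y} \<in> E \<Longrightarrow> x \<noteq> y"
  using card_edge by fastforce

lemma M_subset_E: "M \<subseteq> E"
  using matching_M unfolding matching_def by blast

lemma finite_M: "finite M"
  using M_subset_E finite_E finite_subset by blast

lemma M_disjoint: "g \<in> M \<Longrightarrow> h \<in> M \<Longrightarrow> g \<noteq> h \<Longrightarrow> g \<inter> h = {}"
  using matching_M unfolding matching_def by blast

lemma inj_on_c_M: "inj_on c M"
  using rainbow_M unfolding rainbow_def .

lemma finite_U: "finite U"
  unfolding U_def using finite_V by simp

lemma U_uncovered: "x \<in> U \<Longrightarrow> x \<notin> \<Union>M"
  unfolding U_def by blast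

lemma covered_subset_V: "\<Union>M \<subseteq> V"
  using M_subset_E edge_in_V by blast

lemma card_covered: "card (\<Union>M) = 2 * m"
proof -
  have "card (\<Union>M) = sum card M"
    using M_disjoint finite_subset[OF _ finite_V] M_subset_E edge_in_V
    by (intro card_Union_disjoint) (auto simp: pairwise_def disjnt_def)
  also have "\<dots> = (\<Sum>g\<in>M. 2)" using M_subset_E card_edge by (intro sum.cong) auto
  also have "\<dots> = 2 * m" by simp
  finally show ?thesis .
qed

lemma card_U: "card U = card V - 2 * m"
  unfolding U_def
  using card_Diff_subset[OF finite_subset[OF covered_subset_V finite_V] covered_subset_V] card_covered
  by simp

lemma proper_colors_differ:
  "e \<in> E \<Longrightarrow> f \<in> E \<Longrightarrow> e \<noteq> f \<Longrightarrow> x \<in> e \<Longrightarrow> x \<in> f \<Longrightarrow> c e \<noteq> c f"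
  using proper unfolding proper_edge_coloring_def by blast

lemma inj_on_color_at: "inj_on (\<lambda>z. c {u,z}) {z. {u,z} \<in> E}"
proof (rule inj_onI)
  fix z z' assume h: "z \<in> {z. {u,z} \<in> E}" "z' \<in> {z. {u,z} \<in> E}" "c {u,z} = c {u,z'}"
  show "z = z'"
  proof (rule ccontr)
    assume "z \<noteq> z'"
    moreover have "u \<noteq> z" using edge_ends_distinct h(1) by blast
    ultimately have "{u,z} \<noteq> {u,z'}" by (metis doubleton_eq_iff)
    then show False using proper_colors_differ[of "{u,z}" "{u,z'}" u] h by simp
  qed
qed

lemma degree_eq_card_neighbours: "degree E u = card {z. {u,z} \<in> E}"
proof -
  have "{e\<in>E. u \<in> e} = (\<lambda>z. {u,z}) ` {z. {u,z} \<in> E}"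
  proof (intro equalityI subsetI)
    fix e assume e: "e \<in> {e\<in>E. u \<in> e}"
    then obtain x y where xy: "e = {x,y}"
      using card_edge[of e] card_2_iff[of e] by auto
    then have "e = {u, if u = x then y else x}" using e by auto
    then show "e \<in> (\<lambda>z. {u,z}) ` {z. {u,z} \<in> E}" using e by blast
  qed auto
  moreover have "inj_on (\<lambda>z. {u,z}) {z. {u,z} \<in> E}"
  proof (rule inj_onI)
    fix z z' assume h: "z \<in> {z. {u,z} \<in> E}" "z' \<in> {z. {u,z} \<in> E}" "{u,z} = {u,z'}"
    have "u \<noteq> z" "u \<noteq> z'" using edge_ends_distinct h(1,2) by auto
    then show "z = z'" using h(3) by (metis doubleton_eq_iff)
  qed
  ultimately show ?thesis unfolding degree_def by (simp add: card_image)
qed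

lemma no_augmenting_edge:
  assumes "matching E N" and "rainbow c N" and "card N = m"
    and "x \<notin> \<Union>N" and "y \<notin> \<Union>N" and "{x,y} \<in> E" and "c {x,y} \<notin> c ` N"
  shows False
proof -
  have "finite N" using assms(1) finite_E finite_subset unfolding matching_def by blast
  note aug = augment_rainbow_matching[OF assms(1,2) this assms(4-7)]
  show False using maximum[OF aug(1,2)] aug(3) assms(3) by simp
qed

definition medge :: "'a \<Rightarrow> 'a set" where "medge a = (THE g. g \<in> M \<and> a \<in> g)"

lemma medge_eq: "g \<in> M \<Longrightarrow> a \<in> g \<Longrightarrow> medge a = g"
  unfolding medge_def by (rule the_equality) (use M_disjoint in blast)+

lemma medge_in_M: "a \<in> \<Union>M \<Longrightarrow> medge a \<in> M"
  and in_medge: "a \<in> \<Union>M \<Longrightarrow> a \<in> medge a"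
  using medge_eq by blast+

section \<open>Switchings\<close>

definition link :: "'a \<times> 'a \<Rightarrow> 'a set" where "link p = {fst p, snd p}"

definition link_color :: "'a \<times> 'a \<Rightarrow> 'c" where "link_color p = c (link p)"

definition removed :: "('a \<times> 'a) set \<Rightarrow> 'a set set" where
  "removed \<sigma> = (\<lambda>p. medge (snd p)) ` \<sigma>"

text \<open>A switching \<open>\<sigma>\<close> replaces, for each \<open>(r, a) \<in> \<sigma>\<close>, the \<open>M\<close>-edge of the covered vertex
  \<open>a\<close> by the edge \<open>ra\<close> to the uncovered vertex \<open>r\<close>; the conditions make \<open>switch \<sigma>\<close> a rainbow
  matching of the same size as \<open>M\<close>.\<close>
definition switching :: "('a \<times> 'a) set \<Rightarrow> bool" where
  "switching \<sigma> \<longleftrightarrow> finite \<sigma> \<and> (\<forall>p\<in>\<sigma>. fst p \<in> U \<and> snd p \<in> \<Union>M \<and> link p \<in> E) \<and>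
     inj_on fst \<sigma> \<and> inj_on (\<lambda>p. medge (snd p)) \<sigma> \<and> inj_on link_color \<sigma> \<and>
     (\<forall>p\<in>\<sigma>. link_color p \<notin> c ` (M - removed \<sigma>))"

definition switch :: "('a \<times> 'a) set \<Rightarrow> 'a set set" where
  "switch \<sigma> = (M - removed \<sigma>) \<union> link ` \<sigma>"

definition new_colors :: "('a \<times> 'a) set \<Rightarrow> 'c set" where
  "new_colors \<sigma> = link_color ` \<sigma> - c ` M"

lemma switching_finite: "switching \<sigma> \<Longrightarrow> finite \<sigma>"
  and switching_fst: "switching \<sigma> \<Longrightarrow> p \<in> \<sigma> \<Longrightarrow> fst p \<in> U"
  and switching_snd: "switching \<sigma> \<Longrightarrow> p \<in> \<sigma> \<Longrightarrow> snd p \<in> \<Union>M"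
  and switching_link: "switching \<sigma> \<Longrightarrow> p \<in> \<sigma> \<Longrightarrow> link p \<in> E"
  and switching_inj_fst: "switching \<sigma> \<Longrightarrow> inj_on fst \<sigma>"
  and switching_inj_medge: "switching \<sigma> \<Longrightarrow> inj_on (\<lambda>p. medge (snd p)) \<sigma>"
  and switching_inj_link_color: "switching \<sigma> \<Longrightarrow> inj_on link_color \<sigma>"
  and switching_link_color: "switching \<sigma> \<Longrightarrow> p \<in> \<sigma> \<Longrightarrow> link_color p \<notin> c ` (M - removed \<sigma>)"
  unfolding switching_def by blast+

lemma switching_empty: "switching {}"
  unfolding switching_def by simp

lemma removed_Un: "removed (\<sigma> \<union> \<tau>) = removed \<sigma> \<union> removed \<tau>"
  and removed_insert: "removed (insert (r,a) \<sigma>) = insert (medge a) (removed \<sigma>)"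
  unfolding removed_def by auto

lemma link_color_Pair [simp]: "link_color (r,a) = c {r,a}"
  unfolding link_color_def link_def by simp

lemma removed_subset_M: "switching \<sigma> \<Longrightarrow> removed \<sigma> \<subseteq> M"
  unfolding removed_def using switching_snd medge_in_M by blast

lemma card_removed: "switching \<sigma> \<Longrightarrow> card (removed \<sigma>) = card \<sigma>"
  unfolding removed_def by (rule card_image[OF switching_inj_medge])

lemma partner_not_linked:
  assumes "switching \<sigma>" and "p \<in> \<sigma>" and "q \<in> \<sigma>"
  shows "fst p \<noteq> snd q"
  using switching_fst[OF assms(1,2)] switching_snd[OF assms(1,3)] U_uncovered by metis

lemma inj_on_link: assumes "switching \<sigma>" shows "inj_on link \<sigma>"
proof (rule inj_onI)
  fix p q assume pq: "p \<in> \<sigma>" "q \<in> \<sigma>" "link p = link q"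
  then have "fst p = fst q"
    using partner_not_linked[OF assms pq(1,2)] unfolding link_def by (metis insertE singletonD insertI1)
  then show "p = q" using inj_onD[OF switching_inj_fst[OF assms] _ pq(1,2)] by blast
qed

lemma link_disjoint_kept:
  assumes "switching \<sigma>" and "g \<in> M - removed \<sigma>" and "p \<in> \<sigma>"
  shows "g \<inter> link p = {}"
proof -
  have "snd p \<notin> g"
  proof
    assume "snd p \<in> g"
    then have "medge (snd p) = g" using medge_eq assms(2) by blast
    then show False using assms(2,3) unfolding removed_def by blast
  qed
  moreover have "fst p \<notin> g" using switching_fst[OF assms(1,3)] U_uncovered assms(2) by blast
  ultimately show ?thesis unfolding link_def by blast
qed

lemma links_disjoint:
  assumes "switching \<sigma>" and "p \<in> \<sigma>" and "q \<in> \<sigma>" and "p \<noteq> q"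
  shows "link p \<inter> link q = {}"
proof -
  have "fst p \<noteq> fst q" using inj_onD[OF switching_inj_fst[OF assms(1)] _ assms(2,3)] assms(4) by blast
  moreover have "snd p \<noteq> snd q"
    using inj_onD[OF switching_inj_medge[OF assms(1)] _ assms(2,3)] assms(4) by metis
  ultimately show ?thesis
    using partner_not_linked[OF assms(1,2,3)] partner_not_linked[OF assms(1,3,2)]
    unfolding link_def by auto
qed

lemma matching_switch: assumes "switching \<sigma>" shows "matching E (switch \<sigma>)"
  unfolding matching_def
proof (intro conjI ballI impI)
  show "switch \<sigma> \<subseteq> E"
    unfolding switch_def using M_subset_E switching_link[OF assms] by blast
next
  fix e f assume ef: "e \<in> switch \<sigma>" "f \<in> switch \<sigma>" "e \<noteq> f"
  consider "e \<in> M - removed \<sigma>" "f \<in> M - removed \<sigma>"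
    | p where "p \<in> \<sigma>" "e = link p" "f \<in> M - removed \<sigma>"
    | q where "e \<in> M - removed \<sigma>" "q \<in> \<sigma>" "f = link q"
    | p q where "p \<in> \<sigma>" "q \<in> \<sigma>" "e = link p" "f = link q"
    using ef(1,2) unfolding switch_def by blast
  then show "e \<inter> f = {}"
  proof cases
    case 1 then show ?thesis using M_disjoint ef(3) by blast
  next
    case 2 then show ?thesis using link_disjoint_kept[OF assms] by blast
  next
    case 3 then show ?thesis using link_disjoint_kept[OF assms] by blast
  next
    case 4 then show ?thesis using links_disjoint[OF assms] ef(3) by blast
  qed
qed

lemma rainbow_switch: assumes "switching \<sigma>" shows "rainbow c (switch \<sigma>)"
  unfolding rainbow_def
proof (rule inj_onI)
  fix e f assume ef: "e \<in> switch \<sigma>" "f \<in> switch \<sigma>" "c e = c f"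
  have kept_link: False if "g \<in> M - removed \<sigma>" "p \<in> \<sigma>" "c g = c (link p)" for g p
    using switching_link_color[OF assms that(2)] that(1,3) unfolding link_color_def by (metis image_eqI)
  consider "e \<in> M - removed \<sigma>" "f \<in> M - removed \<sigma>"
    | p where "p \<in> \<sigma>" "e = link p" "f \<in> M - removed \<sigma>"
    | q where "e \<in> M - removed \<sigma>" "q \<in> \<sigma>" "f = link q"
    | p q where "p \<in> \<sigma>" "q \<in> \<sigma>" "e = link p" "f = link q"
    using ef(1,2) unfolding switch_def by blast
  then show "e = f"
  proof cases
    case 1 then show ?thesis using inj_onD[OF inj_on_c_M ef(3)] by blast
  next
    case 2 then show ?thesis using kept_link ef(3) by metis
  next
    case 3 then show ?thesis using kept_link ef(3) by metis
  next
    case 4 then show ?thesis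
      using inj_onD[OF switching_inj_link_color[OF assms]] ef(3) unfolding link_color_def by metis
  qed
qed

lemma card_switch: assumes "switching \<sigma>" shows "card (switch \<sigma>) = m"
proof -
  have removed: "removed \<sigma> \<subseteq> M" and fin: "finite \<sigma>"
    using removed_subset_M switching_finite assms by auto
  have "card (switch \<sigma>) = card (M - removed \<sigma>) + card (link ` \<sigma>)"
    unfolding switch_def using link_disjoint_kept[OF assms] finite_M fin
    by (intro card_Un_disjoint) (auto simp: link_def)
  also have "card (link ` \<sigma>) = card \<sigma>" using card_image[OF inj_on_link[OF assms]] .
  also have "card (M - removed \<sigma>) = m - card \<sigma>"
    using card_Diff_subset[OF finite_subset[OF removed finite_M] removed] card_removed[OF assms] by simp
  also have "m - card \<sigma> + card \<sigma> = m"
    using card_mono[OF finite_M removed] card_removed[OF assms] by simp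
  finally show ?thesis .
qed

lemma uncovered_after_switch:
  assumes "switching \<sigma>" and "x \<in> U" and "x \<notin> fst ` \<sigma>"
  shows "x \<notin> \<Union>(switch \<sigma>)"
proof
  assume "x \<in> \<Union>(switch \<sigma>)"
  moreover have "x \<notin> \<Union>M" using U_uncovered[OF assms(2)] .
  moreover have "x \<noteq> fst p" "x \<noteq> snd p" if "p \<in> \<sigma>" for p
    using that assms(3) switching_snd[OF assms(1) that] \<open>x \<notin> \<Union>M\<close> by force+
  ultimately show False unfolding switch_def link_def by auto
qed

lemma partner_uncovered_after_switch:
  assumes "switching \<sigma>" and "p \<in> \<sigma>" and "x \<in> medge (snd p)" and "x \<noteq> snd p"
  shows "x \<notin> \<Union>(switch \<sigma>)"
proof
  assume "x \<in> \<Union>(switch \<sigma>)"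
  then obtain e where e: "e \<in> switch \<sigma>" "x \<in> e" by blast
  have g: "medge (snd p) \<in> M" using medge_in_M switching_snd[OF assms(1,2)] by blast
  show False
  proof (cases "e \<in> M - removed \<sigma>")
    case True
    then have "e = medge (snd p)" using M_disjoint[of e "medge (snd p)"] e(2) assms(3) g by blast
    then show False using True assms(2) unfolding removed_def by blast
  next
    case False
    then obtain q where q: "q \<in> \<sigma>" "e = link q" using e(1) unfolding switch_def by blast
    have "x \<noteq> fst q" using switching_fst[OF assms(1) q(1)] U_uncovered g assms(3) by blast
    then have "x = snd q" using e(2) q(2) unfolding link_def by blast
    then have "medge (snd q) = medge (snd p)" using medge_eq g assms(3) by simp
    then have "q = p" using inj_onD[OF switching_inj_medge[OF assms(1)] _ q(1) assms(2)] by blast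
    then show False using \<open>x = snd q\<close> assms(4) by simp
  qed
qed

lemma no_augmenting_edge_after_switch:
  assumes "switching \<sigma>" and "x \<notin> \<Union>(switch \<sigma>)" and "y \<notin> \<Union>(switch \<sigma>)" and "{x,y} \<in> E"
    and "c {x,y} \<notin> c ` (M - removed \<sigma>)" and "c {x,y} \<notin> link_color ` \<sigma>"
  shows False
proof -
  have "c {x,y} \<notin> c ` switch \<sigma>"
    using assms(5,6) unfolding switch_def link_color_def by auto
  then show False
    using no_augmenting_edge[OF matching_switch rainbow_switch card_switch] assms(1-4) by blast
qed

lemma link_color_in_M_imp_removed:
  assumes "switching \<sigma>" and "p \<in> \<sigma>" and "g \<in> M" and "link_color p = c g"
  shows "g \<in> removed \<sigma>"
  using switching_link_color[OF assms(1,2)] assms(3,4) by blast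

lemma kept_color_not_link_color:
  assumes "switching \<sigma>" and "g \<in> M" and "g \<notin> removed \<sigma>"
  shows "c g \<notin> link_color ` \<sigma>"
  using link_color_in_M_imp_removed[OF assms(1) _ assms(2)] assms(3) by fastforce

lemma removed_color_not_kept:
  assumes "switching \<sigma>" and "g \<in> removed \<sigma>"
  shows "c g \<notin> c ` (M - removed \<sigma>)"
  using inj_onD[OF inj_on_c_M] removed_subset_M[OF assms(1)] assms(2) by blast

lemma switching_Un:
  assumes sw1: "switching \<sigma>\<^sub>1" and sw2: "switching \<sigma>\<^sub>2"
    and disj_fst: "fst ` \<sigma>\<^sub>1 \<inter> fst ` \<sigma>\<^sub>2 = {}"
    and disj_removed: "removed \<sigma>\<^sub>1 \<inter> removed \<sigma>\<^sub>2 = {}"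
    and disj_new: "new_colors \<sigma>\<^sub>1 \<inter> new_colors \<sigma>\<^sub>2 = {}"
  shows "switching (\<sigma>\<^sub>1 \<union> \<sigma>\<^sub>2)"
proof -
  have disj_colors: "link_color ` \<sigma>\<^sub>1 \<inter> link_color ` \<sigma>\<^sub>2 = {}"
  proof (rule ccontr)
    assume "link_color ` \<sigma>\<^sub>1 \<inter> link_color ` \<sigma>\<^sub>2 \<noteq> {}"
    then obtain p q where pq: "p \<in> \<sigma>\<^sub>1" "q \<in> \<sigma>\<^sub>2" "link_color p = link_color q" by blast
    show False
    proof (cases "link_color p \<in> c ` M")
      case True
      then obtain g where "g \<in> M" "link_color p = c g" by blast
      then have "g \<in> removed \<sigma>\<^sub>1" "g \<in> removed \<sigma>\<^sub>2"
        using link_color_in_M_imp_removed sw1 sw2 pq by metis+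
      then show False using disj_removed by blast
    next
      case False
      then have "link_color p \<in> new_colors \<sigma>\<^sub>1 \<inter> new_colors \<sigma>\<^sub>2"
        using pq unfolding new_colors_def by (metis DiffI IntI image_eqI)
      then show False using disj_new by blast
    qed
  qed
  have inj_Un: "inj_on f (\<sigma>\<^sub>1 \<union> \<sigma>\<^sub>2)"
    if "inj_on f \<sigma>\<^sub>1" "inj_on f \<sigma>\<^sub>2" "f ` \<sigma>\<^sub>1 \<inter> f ` \<sigma>\<^sub>2 = {}" for f :: "'a \<times> 'a \<Rightarrow> 'b"
    using that by (simp add: inj_on_Un) blast
  have "inj_on fst (\<sigma>\<^sub>1 \<union> \<sigma>\<^sub>2)"
    using inj_Un switching_inj_fst[OF sw1] switching_inj_fst[OF sw2] disj_fst by blast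
  moreover have "inj_on (\<lambda>p. medge (snd p)) (\<sigma>\<^sub>1 \<union> \<sigma>\<^sub>2)"
    using inj_Un switching_inj_medge[OF sw1] switching_inj_medge[OF sw2] disj_removed
    unfolding removed_def by blast
  moreover have "inj_on link_color (\<sigma>\<^sub>1 \<union> \<sigma>\<^sub>2)"
    using inj_Un switching_inj_link_color[OF sw1] switching_inj_link_color[OF sw2] disj_colors by blast
  moreover have "link_color p \<notin> c ` (M - removed (\<sigma>\<^sub>1 \<union> \<sigma>\<^sub>2))" if "p \<in> \<sigma>\<^sub>1 \<union> \<sigma>\<^sub>2" for p
    using that switching_link_color[OF sw1] switching_link_color[OF sw2]
    unfolding removed_Un by blast
  ultimately show ?thesis
    using sw1 sw2 unfolding switching_def by auto
qed

lemma switching_insert: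
  assumes sw: "switching \<sigma>" and r: "r \<in> U" "r \<notin> fst ` \<sigma>"
    and a: "a \<in> \<Union>M" "medge a \<notin> removed \<sigma>" and e: "{r,a} \<in> E"
    and c1: "c {r,a} \<notin> link_color ` \<sigma>"
    and c2: "c {r,a} \<notin> c ` (M - insert (medge a) (removed \<sigma>))"
  shows "switching (insert (r,a) \<sigma>)"
proof -
  have "(r,a) \<notin> \<sigma>" using r(2) by force
  then have "inj_on fst (insert (r,a) \<sigma>)" and "inj_on (\<lambda>p. medge (snd p)) (insert (r,a) \<sigma>)"
    and "inj_on link_color (insert (r,a) \<sigma>)"
    using switching_inj_fst[OF sw] switching_inj_medge[OF sw] switching_inj_link_color[OF sw] r(2) a(2) c1
    unfolding removed_def by auto
  moreover have "link_color p \<notin> c ` (M - removed (insert (r,a) \<sigma>))" if "p \<in> insert (r,a) \<sigma>" for p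
  proof (cases "p = (r,a)")
    case True then show ?thesis using c2 unfolding removed_insert by simp
  next
    case False
    then have "p \<in> \<sigma>" using that by blast
    moreover have "c ` (M - removed (insert (r,a) \<sigma>)) \<subseteq> c ` (M - removed \<sigma>)"
      unfolding removed_insert by blast
    ultimately show ?thesis using switching_link_color[OF sw] by blast
  qed
  ultimately show ?thesis
    using sw r(1) a(1) e unfolding switching_def link_def by auto
qed

section \<open>Robust vertices and hitters\<close>

text \<open>When \<open>\<sigma>\<close> frees \<open>a\<close>, the partner of \<open>a\<close> is uncovered in \<open>switch \<sigma>\<close> and the colour of
  the old \<open>M\<close>-edge of \<open>a\<close> is unused there.\<close>
definition frees :: "('a \<times> 'a) set \<Rightarrow> 'a \<Rightarrow> bool" where
  "frees \<sigma> a \<longleftrightarrow> (\<exists>r. (r,a) \<in> \<sigma>) \<and> c (medge a) \<notin> link_color ` \<sigma>"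

definition robust :: "'a set set \<Rightarrow> nat \<Rightarrow> nat \<Rightarrow> 'a \<Rightarrow> bool" where
  "robust S t L a \<longleftrightarrow> (\<forall>Zr Ze Zc. finite Zr \<longrightarrow> finite Ze \<longrightarrow> finite Zc \<longrightarrow>
      card Zr + card Ze + card Zc \<le> t \<longrightarrow> medge a \<notin> Ze \<longrightarrow>
      (\<exists>\<sigma>. switching \<sigma> \<and> frees \<sigma> a \<and> fst ` \<sigma> \<inter> Zr = {} \<and> removed \<sigma> \<inter> Ze = {} \<and>
         new_colors \<sigma> \<inter> Zc = {} \<and> card \<sigma> \<le> L \<and> card (new_colors \<sigma>) \<le> 1 \<and> removed \<sigma> \<subseteq> S))"

lemma robustE:
  assumes "robust S t L a" and "finite Zr" and "finite Ze" and "finite Zc"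
    and "card Zr + card Ze + card Zc \<le> t" and "medge a \<notin> Ze"
  obtains \<sigma> where "switching \<sigma>" "frees \<sigma> a" "fst ` \<sigma> \<inter> Zr = {}" "removed \<sigma> \<inter> Ze = {}"
    "new_colors \<sigma> \<inter> Zc = {}" "card \<sigma> \<le> L" "card (new_colors \<sigma>) \<le> 1" "removed \<sigma> \<subseteq> S"
  using assms(1)[unfolded robust_def, rule_format, OF assms(2-6)] by blast

lemma robust_mono:
  assumes "robust S t L a" and "S \<subseteq> S'" and "t' \<le> t" and "L \<le> L'"
  shows "robust S' t' L' a"
  unfolding robust_def
proof (intro allI impI)
  fix Zr :: "'a set" and Ze :: "'a set set" and Zc :: "'c set"
  assume "finite Zr" "finite Ze" "finite Zc" "card Zr + card Ze + card Zc \<le> t'" "medge a \<notin> Ze"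
  with assms(3) obtain \<sigma> where "switching \<sigma>" "frees \<sigma> a" "fst ` \<sigma> \<inter> Zr = {}" "removed \<sigma> \<inter> Ze = {}"
    "new_colors \<sigma> \<inter> Zc = {}" "card \<sigma> \<le> L" "card (new_colors \<sigma>) \<le> 1" "removed \<sigma> \<subseteq> S"
    by (elim robustE[OF assms(1)]) auto
  with assms(2,4) show "\<exists>\<sigma>. switching \<sigma> \<and> frees \<sigma> a \<and> fst ` \<sigma> \<inter> Zr = {} \<and> removed \<sigma> \<inter> Ze = {} \<and>
      new_colors \<sigma> \<inter> Zc = {} \<and> card \<sigma> \<le> L' \<and> card (new_colors \<sigma>) \<le> 1 \<and> removed \<sigma> \<subseteq> S'"
    by (intro exI[of _ \<sigma>]) auto
qed

lemma frees_removed: "frees \<sigma> a \<Longrightarrow> medge a \<in> removed \<sigma>"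
  unfolding frees_def removed_def by force

lemma frees_partner_uncovered:
  assumes "switching \<sigma>" and "frees \<sigma> a" and "z \<in> medge a" and "z \<noteq> a"
  shows "z \<notin> \<Union>(switch \<sigma>)"
proof -
  obtain r where "(r,a) \<in> \<sigma>" using assms(2) unfolding frees_def by blast
  then show ?thesis using partner_uncovered_after_switch[OF assms(1)] assms(3,4) by fastforce
qed

lemma frees_color_unused:
  assumes "switching \<sigma>" and "frees \<sigma> a"
  shows "c (medge a) \<notin> c ` (M - removed \<sigma>)" and "c (medge a) \<notin> link_color ` \<sigma>"
  using removed_color_not_kept[OF assms(1) frees_removed[OF assms(2)]] assms(2)
  unfolding frees_def by blast+

lemma U_edge_color_in_M:
  assumes "u \<in> U" and "w \<in> U" and "{u,w} \<in> E"
  shows "c {u,w} \<in> c ` M"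
  using no_augmenting_edge[OF matching_M rainbow_M refl] U_uncovered assms by blast

lemma U_edge_color_not_robust:
  assumes "robust S t L a" and "2 \<le> t" and "u \<in> U" and "w \<in> U" and "{u,w} \<in> E"
  shows "c {u,w} \<noteq> c (medge a)"
proof
  assume col: "c {u,w} = c (medge a)"
  have "card {u,w} \<le> 2" by (cases "u = w") auto
  then have "card {u,w} + card ({}::'a set set) + card ({}::'c set) \<le> t" using assms(2) by simp
  then obtain \<sigma> where \<sigma>: "switching \<sigma>" "frees \<sigma> a" "fst ` \<sigma> \<inter> {u,w} = {}"
    by (rule robustE[OF assms(1), rotated 3]) auto
  then have "u \<notin> \<Union>(switch \<sigma>)" "w \<notin> \<Union>(switch \<sigma>)"
    using uncovered_after_switch assms(3,4) by blast+
  then show False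
    using no_augmenting_edge_after_switch[OF \<sigma>(1) _ _ assms(5)] frees_color_unused[OF \<sigma>(1,2)] col
    by simp
qed

lemma partner_edge_color_in_M:
  assumes "robust S t L a" and "2 \<le> t" and "z \<in> medge a" and "z \<noteq> a"
    and "u \<in> U" and "{u,z} \<in> E"
  shows "c {u,z} \<in> c ` M"
proof (rule ccontr)
  assume col: "c {u,z} \<notin> c ` M"
  have "card {u} + card ({}::'a set set) + card {c {u,z}} \<le> t" using assms(2) by simp
  then obtain \<sigma> where \<sigma>: "switching \<sigma>" "frees \<sigma> a" "fst ` \<sigma> \<inter> {u} = {}"
    "new_colors \<sigma> \<inter> {c {u,z}} = {}"
    by (rule robustE[OF assms(1), rotated 3]) auto
  have "u \<notin> \<Union>(switch \<sigma>)" using uncovered_after_switch[OF \<sigma>(1) assms(5)] \<sigma>(3) by blast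
  moreover have "z \<notin> \<Union>(switch \<sigma>)" using frees_partner_uncovered[OF \<sigma>(1,2) assms(3,4)] .
  moreover have "c {u,z} \<notin> link_color ` \<sigma>" using col \<sigma>(4) unfolding new_colors_def by blast
  ultimately show False using no_augmenting_edge_after_switch[OF \<sigma>(1) _ _ assms(6)] col by blast
qed

text \<open>Two robust vertices are freed simultaneously: the budget \<open>t' \<ge> 2L + 2\<close> of \<open>a'\<close> suffices to
  avoid the vertices, edges and new colour of a switching of size at most \<open>L\<close> freeing \<open>a\<close>.\<close>
lemma partner_edge_color_not_robust:
  assumes rob: "robust S t L a" and rob': "robust S' t' L' a'" and "2 \<le> t" and "2 * L + 2 \<le> t'"
    and a': "a' \<in> \<Union>M" and "medge a' \<noteq> medge a" and z: "z \<in> medge a" "z \<noteq> a"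
    and u: "u \<in> U" and e: "{u,z} \<in> E"
  shows "c {u,z} \<noteq> c (medge a')"
proof
  assume col: "c {u,z} = c (medge a')"
  have "card {u} + card {medge a'} + card ({}::'c set) \<le> t" using assms(3) by simp
  then obtain \<sigma>\<^sub>1 where \<sigma>\<^sub>1: "switching \<sigma>\<^sub>1" "frees \<sigma>\<^sub>1 a" "fst ` \<sigma>\<^sub>1 \<inter> {u} = {}"
    "removed \<sigma>\<^sub>1 \<inter> {medge a'} = {}" "card \<sigma>\<^sub>1 \<le> L" "card (new_colors \<sigma>\<^sub>1) \<le> 1"
    by (rule robustE[OF rob, rotated 3]) (use assms(6) in auto)
  have fin: "finite \<sigma>\<^sub>1" using switching_finite[OF \<sigma>\<^sub>1(1)] .
  have "card (insert u (fst ` \<sigma>\<^sub>1)) \<le> L + 1"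
    using card_insert_le_m1[of "L + 1" "fst ` \<sigma>\<^sub>1" u] card_image_le[OF fin, of fst] \<sigma>\<^sub>1(5) fin by simp
  moreover have "card (removed \<sigma>\<^sub>1) \<le> L" using card_removed[OF \<sigma>\<^sub>1(1)] \<sigma>\<^sub>1(5) by simp
  ultimately have "card (insert u (fst ` \<sigma>\<^sub>1)) + card (removed \<sigma>\<^sub>1) + card (new_colors \<sigma>\<^sub>1) \<le> t'"
    using \<sigma>\<^sub>1(6) assms(4) by linarith
  moreover have "medge a' \<notin> removed \<sigma>\<^sub>1" using \<sigma>\<^sub>1(4) by blast
  ultimately obtain \<sigma>\<^sub>2 where \<sigma>\<^sub>2: "switching \<sigma>\<^sub>2" "frees \<sigma>\<^sub>2 a'" "fst ` \<sigma>\<^sub>2 \<inter> insert u (fst ` \<sigma>\<^sub>1) = {}"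
    "removed \<sigma>\<^sub>2 \<inter> removed \<sigma>\<^sub>1 = {}" "new_colors \<sigma>\<^sub>2 \<inter> new_colors \<sigma>\<^sub>1 = {}"
    by (rule robustE[OF rob', rotated 3]) (use fin in \<open>auto simp: removed_def new_colors_def\<close>)
  have sw: "switching (\<sigma>\<^sub>1 \<union> \<sigma>\<^sub>2)"
    by (rule switching_Un[OF \<sigma>\<^sub>1(1) \<sigma>\<^sub>2(1)]) (use \<sigma>\<^sub>2(3,4,5) in blast)+
  have "u \<notin> \<Union>(switch (\<sigma>\<^sub>1 \<union> \<sigma>\<^sub>2))"
    using uncovered_after_switch[OF sw u] \<sigma>\<^sub>1(3) \<sigma>\<^sub>2(3) by blast
  moreover have "z \<notin> \<Union>(switch (\<sigma>\<^sub>1 \<union> \<sigma>\<^sub>2))"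
  proof -
    obtain r where "(r,a) \<in> \<sigma>\<^sub>1" using \<sigma>\<^sub>1(2) unfolding frees_def by blast
    then show ?thesis using partner_uncovered_after_switch[OF sw, of "(r,a)"] z by simp
  qed
  moreover have "c {u,z} \<notin> c ` (M - removed (\<sigma>\<^sub>1 \<union> \<sigma>\<^sub>2))"
    using removed_color_not_kept[OF sw, of "medge a'"] frees_removed[OF \<sigma>\<^sub>2(2)] col
    unfolding removed_Un by simp
  moreover have "c {u,z} \<notin> link_color ` (\<sigma>\<^sub>1 \<union> \<sigma>\<^sub>2)"
    using frees_color_unused(2)[OF \<sigma>\<^sub>2(1,2)] kept_color_not_link_color[OF \<sigma>\<^sub>1(1) medge_in_M[OF a']]
      \<sigma>\<^sub>1(4) col by auto
  ultimately show False using no_augmenting_edge_after_switch[OF sw _ _ e] by blast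
qed

text \<open>\<open>u\<close> hits \<open>z\<close> if the edge \<open>uz\<close> could join the matching once the edges of \<open>S\<close> are switched
  away.\<close>
definition hits :: "'a set set \<Rightarrow> 'a \<Rightarrow> 'a \<Rightarrow> bool" where
  "hits S u z \<longleftrightarrow> u \<in> U \<and> {u,z} \<in> E \<and> c {u,z} \<notin> c ` (M - S)"

definition hitters :: "'a set set \<Rightarrow> 'a \<Rightarrow> 'a set" where
  "hitters S z = {u. hits S u z}"

lemma hitters_subset_U: "hitters S z \<subseteq> U"
  unfolding hitters_def hits_def by blast

lemma finite_hitters: "finite (hitters S z)"
  using finite_subset[OF hitters_subset_U finite_U] .

lemma hitter_avoiding:
  assumes "finite Zr" and "finite Ze" and "finite Zc"
    and "card Zr + card Ze + card Zc < card (hitters S z)"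
  obtains u where "u \<in> hitters S z" "u \<notin> Zr" "c {u,z} \<notin> Zc" "c {u,z} \<notin> c ` Ze"
proof -
  let ?H = "hitters S z"
  have "inj_on (\<lambda>u. c {u,z}) {u. {u,z} \<in> E}"
    using inj_on_color_at[of z] by (simp add: insert_commute)
  then have inj: "inj_on (\<lambda>u. c {u,z}) ?H"
    by (rule inj_on_subset) (auto simp: hitters_def hits_def)
  have "card {u\<in>?H. c {u,z} \<in> Zc} \<le> card Zc"
    by (rule card_inj_on_le[OF inj_on_subset[OF inj] _ assms(3)]) auto
  moreover have "card {u\<in>?H. c {u,z} \<in> c ` Ze} \<le> card Ze"
  proof -
    have "card {u\<in>?H. c {u,z} \<in> c ` Ze} \<le> card (c ` Ze)"
      by (rule card_inj_on_le[OF inj_on_subset[OF inj] _ finite_imageI[OF assms(2)]]) auto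
    also have "\<dots> \<le> card Ze" using card_image_le[OF assms(2)] .
    finally show ?thesis .
  qed
  moreover have "card (?H \<inter> Zr) \<le> card Zr" using assms(1) by (simp add: card_mono)
  moreover have "card ((?H \<inter> Zr) \<union> {u\<in>?H. c {u,z} \<in> Zc} \<union> {u\<in>?H. c {u,z} \<in> c ` Ze})
      \<le> card (?H \<inter> Zr) + card {u\<in>?H. c {u,z} \<in> Zc} + card {u\<in>?H. c {u,z} \<in> c ` Ze}"
    by (meson card_Un_le add_le_mono1 le_trans)
  ultimately have lt: "card ((?H \<inter> Zr) \<union> {u\<in>?H. c {u,z} \<in> Zc} \<union> {u\<in>?H. c {u,z} \<in> c ` Ze}) < card ?H"
    using assms(4) by linarith
  have "\<exists>u\<in>?H. u \<notin> Zr \<and> c {u,z} \<notin> Zc \<and> c {u,z} \<notin> c ` Ze"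
  proof (rule ccontr)
    assume "\<not> ?thesis"
    then have sub: "?H \<subseteq> (?H \<inter> Zr) \<union> {u\<in>?H. c {u,z} \<in> Zc} \<union> {u\<in>?H. c {u,z} \<in> c ` Ze}" by blast
    then show False using card_mono[OF _ sub] finite_hitters lt by simp
  qed
  then show ?thesis using that by blast
qed

lemma hits_color_cases:
  assumes "hits (medge ` A) u z"
  obtains "c {u,z} \<notin> c ` M" | a where "a \<in> A" "c {u,z} = c (medge a)"
  using assms unfolding hits_def by blast

lemma switching_insert_freed_color:
  assumes sw: "switching \<sigma>" and frees: "frees \<sigma> a" and a: "a \<in> \<Union>M"
    and u: "u \<in> U" "u \<notin> fst ` \<sigma>" and z: "z \<in> \<Union>M" "medge z \<notin> removed \<sigma>"
    and e: "{u,z} \<in> E" and col: "c {u,z} = c (medge a)"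
  shows "switching (insert (u,z) \<sigma>)" and "frees (insert (u,z) \<sigma>) z"
    and "new_colors (insert (u,z) \<sigma>) = new_colors \<sigma>"
proof -
  have a_removed: "medge a \<in> removed \<sigma>" using frees_removed[OF frees] .
  show "switching (insert (u,z) \<sigma>)"
  proof (rule switching_insert[OF sw u(1,2) z e])
    show "c {u,z} \<notin> link_color ` \<sigma>" using frees col unfolding frees_def by simp
    have "c {u,z} \<notin> c ` (M - removed \<sigma>)"
      using removed_color_not_kept[OF sw a_removed] col by simp
    then show "c {u,z} \<notin> c ` (M - insert (medge z) (removed \<sigma>))" by blast
  qed
  have "c (medge z) \<noteq> c (medge a)"
  proof
    assume "c (medge z) = c (medge a)"
    then have "medge z = medge a" using inj_onD[OF inj_on_c_M _ medge_in_M[OF z(1)] medge_in_M[OF a]] by simp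
    then show False using z(2) a_removed by simp
  qed
  then show "frees (insert (u,z) \<sigma>) z"
    using kept_color_not_link_color[OF sw medge_in_M[OF z(1)] z(2)] col unfolding frees_def by auto
  show "new_colors (insert (u,z) \<sigma>) = new_colors \<sigma>"
    using col medge_in_M[OF a] unfolding new_colors_def by auto
qed

text \<open>A hitter \<open>u\<close> of \<open>z\<close> is linked to \<open>z\<close>; if the colour of \<open>uz\<close> is that of the \<open>M\<close>-edge of some
  \<open>a \<in> A\<close>, that colour is first made available by a switching freeing \<open>a\<close>.\<close>
lemma switching_through_hitter:
  assumes A: "A \<subseteq> \<Union>M" and rob: "\<forall>a\<in>A. robust (medge ` A) t L a"
    and z: "z \<in> \<Union>M" "medge z \<notin> medge ` A" and hits: "hits (medge ` A) u z"
    and fin: "finite Zr" "finite Ze" "finite Zc" and budget: "card Zr + card Ze + card Zc + 1 \<le> t"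
    and avoid: "u \<notin> Zr" "c {u,z} \<notin> Zc" "c {u,z} \<notin> c ` Ze" and Ze: "medge z \<notin> Ze"
  obtains \<sigma> where "switching \<sigma>" "frees \<sigma> z" "fst ` \<sigma> \<inter> Zr = {}" "removed \<sigma> \<inter> Ze = {}"
    "new_colors \<sigma> \<inter> Zc = {}" "card \<sigma> \<le> L + 1" "card (new_colors \<sigma>) \<le> 1"
    "removed \<sigma> \<subseteq> insert (medge z) (medge ` A)"
proof -
  have u: "u \<in> U" and e: "{u,z} \<in> E" using hits unfolding hits_def by auto
  have z_M: "medge z \<in> M" using medge_in_M[OF z(1)] .
  from hits show thesis
  proof (cases rule: hits_color_cases)
    case 1
    let ?\<sigma> = "{(u,z)}"
    have sw: "switching ?\<sigma>"
      by (rule switching_insert[OF switching_empty u _ z(1) _ e]) (use 1 in \<open>auto simp: removed_def\<close>)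
    have "c (medge z) \<noteq> c {u,z}" using 1 z_M by (metis image_eqI)
    then have "frees ?\<sigma> z" unfolding frees_def by auto
    moreover have "new_colors ?\<sigma> = {c {u,z}}" using 1 unfolding new_colors_def by auto
    moreover have "removed ?\<sigma> = {medge z}" unfolding removed_def by simp
    ultimately show thesis using that[OF sw] avoid Ze by auto
  next
    case (2 a)
    have a: "a \<in> \<Union>M" using 2(1) A by blast
    have "card (insert u Zr) \<le> card Zr + 1" using fin(1) by (simp add: card_insert_if)
    then have budget': "card (insert u Zr) + card Ze + card Zc \<le> t" using budget by linarith
    have Ze_a: "medge a \<notin> Ze" using avoid(3) 2(2) by blast
    obtain \<sigma> where \<sigma>: "switching \<sigma>" "frees \<sigma> a" "fst ` \<sigma> \<inter> insert u Zr = {}"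
      "removed \<sigma> \<inter> Ze = {}" "new_colors \<sigma> \<inter> Zc = {}" "card \<sigma> \<le> L" "card (new_colors \<sigma>) \<le> 1"
      "removed \<sigma> \<subseteq> medge ` A"
      by (rule robustE[OF rob[rule_format, OF 2(1)] finite.insertI[OF fin(1)] fin(2,3) budget' Ze_a])
    have u_new: "u \<notin> fst ` \<sigma>" and z_new: "medge z \<notin> removed \<sigma>" using \<sigma>(3,8) z(2) by blast+
    note extend = switching_insert_freed_color[OF \<sigma>(1,2) a u u_new z(1) z_new e 2(2)]
    let ?\<sigma> = "insert (u,z) \<sigma>"
    have card: "card ?\<sigma> \<le> L + 1"
      using \<sigma>(6) switching_finite[OF \<sigma>(1)] by (simp add: card_insert_if)
    have "fst ` ?\<sigma> \<inter> Zr = {}" using \<sigma>(3) avoid(1) by auto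
    moreover have "removed ?\<sigma> \<inter> Ze = {}" using \<sigma>(4) Ze unfolding removed_insert by blast
    moreover have "removed ?\<sigma> \<subseteq> insert (medge z) (medge ` A)"
      using \<sigma>(8) unfolding removed_insert by blast
    ultimately show thesis
      using that[OF extend(1,2)] card \<sigma>(5,7) unfolding extend(3) by blast
  qed
qed

lemma robust_of_many_hitters:
  assumes A: "A \<subseteq> \<Union>M" and rob: "\<forall>a\<in>A. robust (medge ` A) t L a"
    and z: "z \<in> \<Union>M" "medge z \<notin> medge ` A"
    and "t' + 1 \<le> t" and "t' < card (hitters (medge ` A) z)"
  shows "robust (insert (medge z) (medge ` A)) t' (L + 1) z"
  unfolding robust_def
proof (intro allI impI)
  fix Zr :: "'a set" and Ze :: "'a set set" and Zc :: "'c set"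
  assume fin: "finite Zr" "finite Ze" "finite Zc"
    and budget: "card Zr + card Ze + card Zc \<le> t'" and Ze: "medge z \<notin> Ze"
  have "card Zr + card Ze + card Zc < card (hitters (medge ` A) z)" using budget assms(6) by linarith
  then obtain u where u: "u \<in> hitters (medge ` A) z" "u \<notin> Zr" "c {u,z} \<notin> Zc" "c {u,z} \<notin> c ` Ze"
    by (rule hitter_avoiding[OF fin])
  have hits: "hits (medge ` A) u z" using u(1) unfolding hitters_def by simp
  have "card Zr + card Ze + card Zc + 1 \<le> t" using budget assms(5) by linarith
  then obtain \<sigma> where "switching \<sigma>" "frees \<sigma> z" "fst ` \<sigma> \<inter> Zr = {}" "removed \<sigma> \<inter> Ze = {}"
    "new_colors \<sigma> \<inter> Zc = {}" "card \<sigma> \<le> L + 1" "card (new_colors \<sigma>) \<le> 1"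
    "removed \<sigma> \<subseteq> insert (medge z) (medge ` A)"
    by (rule switching_through_hitter[OF A rob z hits fin _ u(2-4) Ze])
  then show "\<exists>\<sigma>. switching \<sigma> \<and> frees \<sigma> z \<and> fst ` \<sigma> \<inter> Zr = {} \<and> removed \<sigma> \<inter> Ze = {} \<and>
      new_colors \<sigma> \<inter> Zc = {} \<and> card \<sigma> \<le> L + 1 \<and> card (new_colors \<sigma>) \<le> 1 \<and>
      removed \<sigma> \<subseteq> insert (medge z) (medge ` A)"
    by blast
qed

text \<open>If \<open>z\<close> has many hitters, an edge \<open>u'z'\<close> from \<open>U\<close> to the partner \<open>z'\<close> of \<open>z\<close> must
  reuse the colour of an \<open>M\<close>-edge outside \<open>S\<close>: otherwise a switching freeing \<open>z\<close> (and, if that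
  colour is the one of the \<open>M\<close>-edge of some \<open>a' \<in> A\<close>, also \<open>a'\<close>) would leave \<open>u'z'\<close> augmenting.\<close>
lemma popular_partner_color_in_M:
  assumes A: "A \<subseteq> \<Union>M" and rob: "\<forall>a\<in>A. robust (medge ` A) t L a" and t: "2 * L + 3 \<le> t"
    and z: "z \<in> \<Union>M" "medge z \<notin> medge ` A" and z': "z' \<in> medge z" "z' \<noteq> z"
    and popular: "2 * L + 3 \<le> card (hitters (medge ` A) z)"
    and u': "u' \<in> U" and e': "{u',z'} \<in> E"
  shows "c {u',z'} \<in> c ` M"
proof (rule ccontr)
  assume col: "c {u',z'} \<notin> c ` M"
  have "card {u'} + card ({}::'a set set) + card {c {u',z'}} < card (hitters (medge ` A) z)"
    using popular by simp
  then obtain u where u: "u \<in> hitters (medge ` A) z" "u \<notin> {u'}" "c {u,z} \<notin> {c {u',z'}}"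
    "c {u,z} \<notin> c ` {}"
    by (rule hitter_avoiding[rotated 3]) auto
  have hits: "hits (medge ` A) u z" using u(1) unfolding hitters_def by simp
  have budget: "card {u'} + card ({}::'a set set) + card {c {u',z'}} + 1 \<le> t" using t by simp
  have Ze: "medge z \<notin> ({}::'a set set)" by simp
  obtain \<sigma> where \<sigma>: "switching \<sigma>" "frees \<sigma> z" "fst ` \<sigma> \<inter> {u'} = {}"
    "new_colors \<sigma> \<inter> {c {u',z'}} = {}"
    by (rule switching_through_hitter[OF A rob z hits finite.insertI[OF finite.emptyI] finite.emptyI
          finite.insertI[OF finite.emptyI] budget u(2-4) Ze])
  have "u' \<notin> \<Union>(switch \<sigma>)" using uncovered_after_switch[OF \<sigma>(1) u'] \<sigma>(3) by blast
  moreover have "z' \<notin> \<Union>(switch \<sigma>)" using frees_partner_uncovered[OF \<sigma>(1,2) z'] .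
  moreover have "c {u',z'} \<notin> link_color ` \<sigma>" using col \<sigma>(4) unfolding new_colors_def by blast
  ultimately show False using no_augmenting_edge_after_switch[OF \<sigma>(1) _ _ e'] col by blast
qed

lemma popular_partner_color_not_robust:
  assumes A: "A \<subseteq> \<Union>M" and rob: "\<forall>a\<in>A. robust (medge ` A) t L a" and t: "2 * L + 3 \<le> t"
    and z: "z \<in> \<Union>M" "medge z \<notin> medge ` A" and z': "z' \<in> medge z" "z' \<noteq> z"
    and popular: "2 * L + 3 \<le> card (hitters (medge ` A) z)"
    and u': "u' \<in> U" and e': "{u',z'} \<in> E" and a': "a' \<in> A"
  shows "c {u',z'} \<noteq> c (medge a')"
proof
  assume col: "c {u',z'} = c (medge a')"
  have "card {u'} + card ({}::'a set set) + card ({}::'c set) \<le> t" using t by simp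
  then obtain \<sigma>\<^sub>2 where \<sigma>\<^sub>2: "switching \<sigma>\<^sub>2" "frees \<sigma>\<^sub>2 a'" "fst ` \<sigma>\<^sub>2 \<inter> {u'} = {}"
    "card \<sigma>\<^sub>2 \<le> L" "card (new_colors \<sigma>\<^sub>2) \<le> 1" "removed \<sigma>\<^sub>2 \<subseteq> medge ` A"
    by (rule robustE[OF rob[rule_format, OF a'], rotated 3]) auto
  have fin: "finite \<sigma>\<^sub>2" using switching_finite[OF \<sigma>\<^sub>2(1)] .
  let ?Zr = "insert u' (fst ` \<sigma>\<^sub>2)" and ?Ze = "removed \<sigma>\<^sub>2" and ?Zc = "new_colors \<sigma>\<^sub>2"
  have fin_Z: "finite ?Zr" "finite ?Ze" "finite ?Zc"
    using fin unfolding removed_def new_colors_def by auto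
  have "card ?Zr \<le> L + 1"
    using card_image_le[OF fin, of fst] \<sigma>\<^sub>2(4) fin by (simp add: card_insert_if)
  moreover have "card ?Ze \<le> L" using card_removed[OF \<sigma>\<^sub>2(1)] \<sigma>\<^sub>2(4) by simp
  ultimately have budget: "card ?Zr + card ?Ze + card ?Zc + 1 \<le> t"
    and many: "card ?Zr + card ?Ze + card ?Zc < card (hitters (medge ` A) z)"
    using \<sigma>\<^sub>2(5) t popular by linarith+
  obtain u where u: "u \<in> hitters (medge ` A) z" "u \<notin> ?Zr" "c {u,z} \<notin> ?Zc" "c {u,z} \<notin> c ` ?Ze"
    by (rule hitter_avoiding[OF fin_Z many])
  have hits: "hits (medge ` A) u z" using u(1) unfolding hitters_def by simp
  have "medge z \<notin> ?Ze" using \<sigma>\<^sub>2(6) z(2) by blast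
  then obtain \<sigma>\<^sub>1 where \<sigma>\<^sub>1: "switching \<sigma>\<^sub>1" "frees \<sigma>\<^sub>1 z" "fst ` \<sigma>\<^sub>1 \<inter> ?Zr = {}"
    "removed \<sigma>\<^sub>1 \<inter> ?Ze = {}" "new_colors \<sigma>\<^sub>1 \<inter> ?Zc = {}"
    by (rule switching_through_hitter[OF A rob z hits fin_Z budget u(2-4)])
  have sw: "switching (\<sigma>\<^sub>1 \<union> \<sigma>\<^sub>2)"
    by (rule switching_Un[OF \<sigma>\<^sub>1(1) \<sigma>\<^sub>2(1)]) (use \<sigma>\<^sub>1(3,4,5) in blast)+
  have "u' \<notin> \<Union>(switch (\<sigma>\<^sub>1 \<union> \<sigma>\<^sub>2))"
    using uncovered_after_switch[OF sw u'] \<sigma>\<^sub>1(3) \<sigma>\<^sub>2(3) by blast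
  moreover have "z' \<notin> \<Union>(switch (\<sigma>\<^sub>1 \<union> \<sigma>\<^sub>2))"
  proof -
    obtain r where "(r,z) \<in> \<sigma>\<^sub>1" using \<sigma>\<^sub>1(2) unfolding frees_def by blast
    then show ?thesis using partner_uncovered_after_switch[OF sw, of "(r,z)"] z' by simp
  qed
  moreover have "c {u',z'} \<notin> c ` (M - removed (\<sigma>\<^sub>1 \<union> \<sigma>\<^sub>2))"
    using removed_color_not_kept[OF sw, of "medge a'"] frees_removed[OF \<sigma>\<^sub>2(2)] col
    unfolding removed_Un by simp
  moreover have "c {u',z'} \<notin> link_color ` (\<sigma>\<^sub>1 \<union> \<sigma>\<^sub>2)"
  proof -
    have "medge a' \<notin> removed \<sigma>\<^sub>1" using \<sigma>\<^sub>1(4) frees_removed[OF \<sigma>\<^sub>2(2)] by blast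
    moreover have "a' \<in> \<Union>M" using a' A by blast
    ultimately show ?thesis
      using frees_color_unused(2)[OF \<sigma>\<^sub>2(1,2)] kept_color_not_link_color[OF \<sigma>\<^sub>1(1) medge_in_M] col
      by auto
  qed
  ultimately show False using no_augmenting_edge_after_switch[OF sw _ _ e'] by blast
qed

lemma popular_partner_unhit:
  assumes A: "A \<subseteq> \<Union>M" and rob: "\<forall>a\<in>A. robust (medge ` A) t L a" and t: "2 * L + 3 \<le> t"
    and z: "z \<in> \<Union>M" "medge z \<notin> medge ` A" and z': "z' \<in> medge z" "z' \<noteq> z"
    and popular: "2 * L + 3 \<le> card (hitters (medge ` A) z)"
  shows "\<not> hits (medge ` A) u' z'"
proof
  assume hits: "hits (medge ` A) u' z'"
  then have u': "u' \<in> U" and e': "{u',z'} \<in> E" unfolding hits_def by auto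
  from hits show False
    by (cases rule: hits_color_cases)
      (use popular_partner_color_in_M[OF assms u' e'] popular_partner_color_not_robust[OF assms u' e'] in auto)
qed

lemma U_unhit:
  assumes rob: "\<forall>a\<in>A. robust (medge ` A) t L a" and t: "2 \<le> t" and z: "z \<in> U"
  shows "\<not> hits (medge ` A) u z"
proof
  assume hits: "hits (medge ` A) u z"
  then have u: "u \<in> U" and e: "{u,z} \<in> E" unfolding hits_def by auto
  from hits show False
    by (cases rule: hits_color_cases)
      (use U_edge_color_in_M[OF u z e] U_edge_color_not_robust[OF rob[rule_format] t u z e] in auto)
qed

lemma robust_partner_unhit:
  assumes A: "A \<subseteq> \<Union>M" and rob: "\<forall>a\<in>A. robust (medge ` A) t L a"
    and t: "2 * L + 2 \<le> t" "2 \<le> t" and a: "a \<in> A" and z: "z \<in> medge a" "z \<noteq> a"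
  shows "\<not> hits (medge ` A) u z"
proof
  assume hits: "hits (medge ` A) u z"
  then have u: "u \<in> U" and e: "{u,z} \<in> E" unfolding hits_def by auto
  have a_M: "a \<in> \<Union>M" using a A by blast
  from hits show False
  proof (cases rule: hits_color_cases)
    case 1
    then show False using partner_edge_color_in_M[OF rob[rule_format, OF a] t(2) z u e] by blast
  next
    case (2 a')
    show False
    proof (cases "medge a' = medge a")
      case True
      have "medge a \<in> E" "{u,z} \<noteq> medge a"
        using medge_in_M[OF a_M] M_subset_E U_uncovered[OF u] in_medge[OF a_M] by blast+
      then have "c {u,z} \<noteq> c (medge a)" using proper_colors_differ[OF e _ _ _ z(1)] by blast
      then show False using 2(2) True by simp
    next
      case False
      have "a' \<in> \<Union>M" using 2(1) A by blast
      then show False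
        using partner_edge_color_not_robust[OF rob[rule_format, OF a] rob[rule_format, OF 2(1)]
            t(2,1) _ False z u e] 2(2) by blast
    qed
  qed
qed

lemma hits_target:
  assumes A: "A \<subseteq> \<Union>M" and rob: "\<forall>a\<in>A. robust (medge ` A) t L a"
    and t: "2 * L + 2 \<le> t" "2 \<le> t" and hits: "hits (medge ` A) u z"
  shows "z \<in> \<Union>(M - medge ` A) \<or> z \<in> A"
proof (rule ccontr)
  assume not: "\<not> ?thesis"
  have "z \<notin> U" using U_unhit[OF rob t(2)] hits by blast
  moreover have "z \<in> V" using hits edge_in_V unfolding hits_def by blast
  ultimately have z: "z \<in> \<Union>M" unfolding U_def by blast
  with not obtain a where a: "a \<in> A" "medge z = medge a" "z \<noteq> a"
    using medge_in_M in_medge by blast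
  then have "z \<in> medge a" using in_medge[OF z] by simp
  then show False using robust_partner_unhit[OF A rob t a(1) _ a(3)] hits by blast
qed

section \<open>Rounds\<close>

definition robust_reps :: "'a set \<Rightarrow> nat \<Rightarrow> nat \<Rightarrow> bool" where
  "robust_reps A t L \<longleftrightarrow>
     finite A \<and> A \<subseteq> \<Union>M \<and> inj_on medge A \<and> (\<forall>a\<in>A. robust (medge ` A) t L a)"

definition popular :: "'a set set \<Rightarrow> nat \<Rightarrow> 'a set" where
  "popular S T = {z \<in> \<Union>(M - S). T \<le> card (hitters S z)}"

lemma robust_reps_empty: "robust_reps {} t L"
  unfolding robust_reps_def by simp

lemma card_M_minus_medges:
  assumes "robust_reps A t L"
  shows "card (M - medge ` A) + card A = m"
proof -
  have A: "finite A" "A \<subseteq> \<Union>M" "inj_on medge A" using assms unfolding robust_reps_def by auto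
  then have sub: "medge ` A \<subseteq> M" using medge_in_M by blast
  have "card (medge ` A) = card A" using card_image[OF A(3)] .
  moreover have "card (M - medge ` A) = m - card (medge ` A)"
    using card_Diff_subset[OF finite_imageI[OF A(1)] sub] .
  moreover have "card (medge ` A) \<le> m" using card_mono[OF finite_M sub] .
  ultimately show ?thesis by linarith
qed

lemma finite_Union_M_minus: "finite (\<Union>(M - S))"
  by (rule finite_subset[OF _ finite_V]) (use covered_subset_V in blast)

lemma card_Union_M_minus: "card (\<Union>(M - S)) \<le> 2 * card (M - S)"
proof -
  have "card (\<Union>(M - S)) \<le> sum card (M - S)" by (rule card_Union_le_sum_card)
  also have "\<dots> = (\<Sum>g\<in>M - S. 2)" using M_subset_E card_edge by (intro sum.cong) auto
  finally show ?thesis by (simp add: mult.commute)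
qed

text \<open>An uncovered vertex has at least \<open>\<delta>\<close> neighbours; at most \<open>|M - S|\<close> of the edges to them
  have colours of \<open>M - S\<close>, and the rest end in \<open>V(M - S)\<close> or in \<open>A\<close>.\<close>
lemma hits_from_uncovered:
  assumes reps: "robust_reps A t L" and t: "2 * L + 2 \<le> t" "2 \<le> t" and u: "u \<in> U"
  shows "\<delta> - m \<le> card {z\<in>\<Union>(M - medge ` A). hits (medge ` A) u z}"
proof -
  let ?S = "medge ` A"
  let ?Nb = "{z. {u,z} \<in> E}"
  let ?Hit = "{z. hits ?S u z}" and ?Miss = "{z\<in>?Nb. c {u,z} \<in> c ` (M - ?S)}"
  let ?Land = "{z\<in>\<Union>(M - ?S). hits ?S u z}"
  have A: "finite A" "A \<subseteq> \<Union>M" and rob: "\<forall>a\<in>A. robust ?S t L a"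
    using reps unfolding robust_reps_def by auto
  have fin_Nb: "finite ?Nb"
    by (rule finite_subset[OF _ finite_V]) (use edge_in_V in blast)
  have "u \<in> V" using u unfolding U_def by blast
  then have "\<delta> \<le> card ?Nb" using degree_ge[of u] degree_eq_card_neighbours[of u] by simp
  also have "\<dots> \<le> card ?Hit + card ?Miss"
  proof -
    have "?Nb = ?Hit \<union> ?Miss" using u unfolding hits_def by auto
    moreover have "card (?Hit \<union> ?Miss) \<le> card ?Hit + card ?Miss" by (rule card_Un_le)
    ultimately show ?thesis by (simp only:)
  qed
  also have "card ?Miss \<le> card (M - ?S)"
  proof -
    have "card ?Miss \<le> card (c ` (M - ?S))"
      by (rule card_inj_on_le[OF inj_on_subset[OF inj_on_color_at]]) (use finite_M in auto)
    also have "\<dots> \<le> card (M - ?S)" using card_image_le finite_M by blast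
    finally show ?thesis .
  qed
  also have "card ?Hit \<le> card ?Land + card A"
  proof -
    have "?Hit \<subseteq> ?Land \<union> A" using hits_target[OF A(2) rob t] by blast
    moreover have "finite ?Land"
      by (rule finite_subset[OF _ fin_Nb]) (auto simp: hits_def)
    ultimately have "card ?Hit \<le> card (?Land \<union> A)" using A(1) by (simp add: card_mono)
    then show ?thesis using card_Un_le[of ?Land A] by linarith
  qed
  finally show ?thesis using card_M_minus_medges[OF reps] by linarith
qed

lemma sum_hitters_lower:
  assumes reps: "robust_reps A t L" and t: "2 * L + 2 \<le> t" "2 \<le> t"
  shows "card U * (\<delta> - m) \<le> (\<Sum>z\<in>\<Union>(M - medge ` A). card (hitters (medge ` A) z))"
proof -
  let ?S = "medge ` A"
  have "card U * (\<delta> - m) = (\<Sum>u\<in>U. \<delta> - m)" by simp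
  also have "\<dots> \<le> (\<Sum>u\<in>U. card {z\<in>\<Union>(M - ?S). hits ?S u z})"
    using hits_from_uncovered[OF reps t] by (rule sum_mono)
  also have "\<dots> = (\<Sum>z\<in>\<Union>(M - ?S). card {u\<in>U. hits ?S u z})"
    by (rule sum_card_filter_swap[OF finite_U finite_Union_M_minus])
  also have "\<dots> = (\<Sum>z\<in>\<Union>(M - ?S). card (hitters ?S z))"
    unfolding hitters_def hits_def by (rule sum.cong) (auto intro: arg_cong[where f = card])
  finally show ?thesis .
qed

lemma sum_hitters_upper:
  "(\<Sum>z\<in>\<Union>(M - S). card (hitters S z)) \<le> card (popular S T) * card U + card (\<Union>(M - S)) * (T - 1)"
proof -
  let ?W = "\<Union>(M - S)"
  have "card (hitters S z) \<le> (if z \<in> popular S T then card U else 0) + (T - 1)" if "z \<in> ?W" for z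
  proof -
    have "card (hitters S z) \<le> card U" by (rule card_mono[OF finite_U hitters_subset_U])
    then show ?thesis using that unfolding popular_def by auto
  qed
  then have "(\<Sum>z\<in>?W. card (hitters S z)) \<le> (\<Sum>z\<in>?W. (if z \<in> popular S T then card U else 0) + (T - 1))"
    by (rule sum_mono)
  also have "\<dots> = (\<Sum>z\<in>?W \<inter> popular S T. card U) + card ?W * (T - 1)"
    unfolding sum.distrib sum.inter_restrict[OF finite_Union_M_minus] by simp
  also have "?W \<inter> popular S T = popular S T" unfolding popular_def by blast
  finally show ?thesis by simp
qed

lemma card_popular_lower:
  assumes reps: "robust_reps A t L" and t: "2 * L + 2 \<le> t" "2 \<le> t"
    and deficit: "m < \<delta>" and U: "2 * (\<delta> - m) \<le> card U"
  shows "real (\<delta> - m) - real (T - 1) * real (card (M - medge ` A)) / real (\<delta> - m)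
    \<le> real (card (popular (medge ` A) T))"
proof (rule count_lower_bound)
  let ?S = "medge ` A"
  have "card U * (\<delta> - m) \<le> card (popular ?S T) * card U + 2 * card (M - ?S) * (T - 1)"
    using sum_hitters_lower[OF reps t] sum_hitters_upper[of ?S T]
      mult_right_mono[OF card_Union_M_minus[of ?S], of "T - 1"] by linarith
  then show "real (\<delta> - m) * real (card U)
      \<le> real (card (popular ?S T)) * real (card U) + 2 * real (card (M - ?S)) * real (T - 1)"
    by (simp add: algebra_simps of_nat_mult[symmetric] del: of_nat_mult)
qed (use deficit U in auto)

lemma inj_on_medge_popular:
  assumes reps: "robust_reps A t L" and t: "2 * L + 3 \<le> t" and T: "2 * L + 3 \<le> T"
  shows "inj_on medge (popular (medge ` A) T)"
proof (rule inj_onI)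
  fix z z' assume zz: "z \<in> popular (medge ` A) T" "z' \<in> popular (medge ` A) T" "medge z = medge z'"
  have A: "A \<subseteq> \<Union>M" and rob: "\<forall>a\<in>A. robust (medge ` A) t L a"
    using reps unfolding robust_reps_def by auto
  have z: "z \<in> \<Union>M" "medge z \<notin> medge ` A" and z': "z' \<in> \<Union>M"
    using zz(1,2) medge_eq unfolding popular_def by force+
  show "z = z'"
  proof (rule ccontr)
    assume "z \<noteq> z'"
    moreover have "z' \<in> medge z" using in_medge[OF z'] zz(3) by simp
    moreover have "2 * L + 3 \<le> card (hitters (medge ` A) z)" using zz(1) T unfolding popular_def by simp
    moreover obtain u' where "hits (medge ` A) u' z'"
      using zz(2) T unfolding popular_def hitters_def by fastforce
    ultimately show False using popular_partner_unhit[OF A rob t z] by blast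
  qed
qed

lemma medge_popular_subset: "medge ` popular S T \<subseteq> M - S"
  unfolding popular_def using medge_eq by fastforce

lemma robust_reps_extend:
  assumes reps: "robust_reps A (T - r) r" and T: "3 * r + 3 \<le> T"
  shows "robust_reps (A \<union> popular (medge ` A) T) (T - Suc r) (Suc r)"
proof -
  let ?S = "medge ` A" and ?P = "popular (medge ` A) T"
  have A: "finite A" "A \<subseteq> \<Union>M" "inj_on medge A" and rob: "\<forall>a\<in>A. robust ?S (T - r) r a"
    using reps unfolding robust_reps_def by auto
  have P: "?P \<subseteq> \<Union>(M - ?S)" unfolding popular_def by blast
  have "finite (A \<union> ?P)" using A(1) finite_subset[OF P finite_Union_M_minus] by simp
  moreover have "A \<union> ?P \<subseteq> \<Union>M" using A(2) P by blast
  moreover have "inj_on medge (A \<union> ?P)"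
    using A(3) inj_on_medge_popular[OF reps, of T] T medge_popular_subset[of ?S T]
    by (auto simp: inj_on_Un)
  moreover have "robust (medge ` (A \<union> ?P)) (T - Suc r) (Suc r) a" if "a \<in> A \<union> ?P" for a
  proof (cases "a \<in> A")
    case True
    then show ?thesis by (rule robust_mono[OF rob[rule_format]]) auto
  next
    case False
    then have a: "a \<in> ?P" using that by blast
    then have "a \<in> \<Union>M" "medge a \<notin> ?S" using medge_popular_subset P by blast+
    moreover have "T - Suc r < card (hitters ?S a)" using a T unfolding popular_def by auto
    ultimately have "robust (insert (medge a) ?S) (T - Suc r) (r + 1) a"
      using robust_of_many_hitters[OF A(2) rob] T by simp
    then show ?thesis by (rule robust_mono) (use a in auto)
  qed
  ultimately show ?thesis unfolding robust_reps_def by blast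
qed

lemma round_step:
  assumes reps: "robust_reps A (T - r) r" and T: "3 * r + 3 \<le> T"
    and deficit: "m < \<delta>" and U: "2 * (\<delta> - m) \<le> card U"
  obtains A' where "robust_reps A' (T - Suc r) (Suc r)"
    and "real (card (M - medge ` A')) \<le> real (card (M - medge ` A)) -
      (real (\<delta> - m) - real (T - 1) * real (card (M - medge ` A)) / real (\<delta> - m))"
proof -
  let ?S = "medge ` A" and ?P = "popular (medge ` A) T"
  have inj: "inj_on medge ?P" using inj_on_medge_popular[OF reps] T by simp
  have fin: "finite (medge ` ?P)"
    by (rule finite_subset[OF medge_popular_subset]) (use finite_M in blast)
  have "M - medge ` (A \<union> ?P) = (M - ?S) - medge ` ?P" by blast
  then have "card (M - medge ` (A \<union> ?P)) = card (M - ?S) - card ?P"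
    using card_Diff_subset[OF fin medge_popular_subset] card_image[OF inj] by simp
  moreover have "card ?P \<le> card (M - ?S)"
    using card_mono[OF _ medge_popular_subset[of ?S T]] card_image[OF inj] finite_M by simp
  moreover have "real (\<delta> - m) - real (T - 1) * real (card (M - ?S)) / real (\<delta> - m) \<le> real (card ?P)"
    using card_popular_lower[OF reps _ _ deficit U, of T] T by linarith
  ultimately show thesis
    using that[OF robust_reps_extend[OF reps T]] by (simp add: of_nat_diff)
qed

lemma rounds:
  assumes deficit: "m < \<delta>" and U: "2 * (\<delta> - m) \<le> card U" and "r \<le> R"
  shows "\<exists>A. robust_reps A (3 * R - r) r \<and>
    real (card (M - medge ` A)) \<le> untouched_bound (real m) (real (\<delta> - m)) (real (3 * R - 1)) r"
  using \<open>r \<le> R\<close>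
proof (induction r)
  case 0
  show ?case using robust_reps_empty by (intro exI[of _ "{}"]) simp
next
  case (Suc r)
  then obtain A where A: "robust_reps A (3 * R - r) r"
    and x: "real (card (M - medge ` A)) \<le> untouched_bound (real m) (real (\<delta> - m)) (real (3 * R - 1)) r"
    by auto
  have T: "3 * r + 3 \<le> 3 * R" using Suc.prems by simp
  obtain A' where A': "robust_reps A' (3 * R - Suc r) (Suc r)"
    and x': "real (card (M - medge ` A')) \<le> real (card (M - medge ` A)) -
      (real (\<delta> - m) - real (3 * R - 1) * real (card (M - medge ` A)) / real (\<delta> - m))"
    by (rule round_step[OF A T deficit U])
  have "real (card (M - medge ` A')) \<le> untouched_bound (real m) (real (\<delta> - m)) (real (3 * R - 1)) (Suc r)"
    using x' untouched_bound_step_mono[OF _ _ x, of "real (\<delta> - m)" "real (3 * R - 1)"] deficit by simp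
  then show ?case using A' by blast
qed

lemma card_M_ge:
  assumes "2 * \<delta> \<le> card V"
  shows "real \<delta> - 2 * real \<delta> powr (2/3) \<le> real m"
proof (rule ccontr)
  assume "\<not> ?thesis"
  then have lt: "real m + 2 * real \<delta> powr (2/3) < real \<delta>" by simp
  moreover have "0 \<le> real \<delta> powr (2/3)" by simp
  ultimately have "real m < real \<delta>" by linarith
  then have deficit: "m < \<delta>" by simp
  then have k: "real (\<delta> - m) = real \<delta> - real m" by (simp add: of_nat_diff)
  have "0 < real \<delta>" using deficit by simp
  moreover have "2 * real \<delta> powr (2/3) < real (\<delta> - m)" using lt k by linarith
  ultimately have "8 * (real m + real (\<delta> - m))^2 < real (\<delta> - m)^3"
    using cube_gt_of_powr_gt k by simp
  then obtain R where neg: "untouched_bound (real m) (real (\<delta> - m)) (real (3 * R - 1)) R < 0"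
    using untouched_bound_eventually_negative by auto
  have "2 * (\<delta> - m) \<le> card U" using card_U assms by simp
  then obtain A where "real (card (M - medge ` A)) \<le> untouched_bound (real m) (real (\<delta> - m)) (real (3 * R - 1)) R"
    using rounds[OF deficit _ order_refl] by blast
  then show False using neg by simp
qed

end

theorem mainTheorem2:
  fixes V :: "'a set" and E :: "'a set set" and c :: "'a set \<Rightarrow> 'c"
  assumes "simple_graph V E" and "V \<noteq> {}"
    and "proper_edge_coloring E c"
    and "card V \<ge> 2 * min_degree V E"
  shows "\<exists>M. matching E M \<and> rainbow c M \<and>
           real (card M) \<ge> real (min_degree V E) - 2 * real (min_degree V E) powr (2/3)"
proof -
  obtain M where M: "matching E M" "rainbow c M"
    and maximum: "\<And>N. matching E N \<Longrightarrow> rainbow c N \<Longrightarrow> card N \<le> card M"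
    by (rule ex_maximum_rainbow_matching[OF simple_graph_finite_edges[OF assms(1)], where c = c]) blast
  have "min_degree V E \<le> degree E v" if "v \<in> V" for v
    using that assms(1) unfolding min_degree_def simple_graph_def by (intro Min_le) auto
  then interpret max_rainbow_matching V E c M "min_degree V E"
    using assms(1,3) M maximum by unfold_locales
  show ?thesis using M card_M_ge[OF assms(4)] by blast
qed

end
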